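(* For every graph $G$ and every integer $\ell\ge 0$, a set $B\subseteq V(G)$ is an $\ell$-leaky forcing set of $G$ if and only if it is a mixed $\ell$-leaky forcing set of $G$. In particular $\operatorname{Z}_{(\ell)}(G)=\operatorname{Z}^m_{(\ell)}(G)$.
   Context: All graphs are finite, simple and undirected. Zero forcing: a blue vertex $u$ with exactly one white neighbor $w$ may force $w$ (color it blue), written $u\to w$. A vertex leak is a vertex not allowed to perform any force; an edge leak is an edge $xy$ across which no force may be performed (neither $x\to y$ nor $y\to x$); a specified leak is an ordered pair $x\to y$ meaning $x$ may not force $y$. $B$ is an $\ell$-leaky forcing set if for every set of at most $\ell$ vertex leaks, exhaustively applying the forcing rule from initial blue set $B$ colors all of $V(G)$ blue; $B$ is a mixed $\ell$-leaky forcing set if the same holds for every set of at most $\ell$ leaks of any mix of the three kinds. $\operatorname{Z}_{(\ell)}(G)$ and $\operatorname{Z}^m_{(\ell)}(G)$ are the minimum sizes of an $\ell$-leaky forcing set and a mixed $\ell$-leaky forcing set, respectively. *)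

theory Defs
  imports Main
begin

definition simple_graph :: "'a set \<Rightarrow> ('a \<Rightarrow> 'a \<Rightarrow> bool) \<Rightarrow> bool" where
  "simple_graph V E \<longleftrightarrow> finite V \<and> (\<forall>x y. E x y \<longrightarrow> E y x) \<and> (\<forall>x. \<not> E x x)
     \<and> (\<forall>x y. E x y \<longrightarrow> x \<in> V \<and> y \<in> V)"

text \<open>Final blue set obtained by exhaustively applying the zero forcing rule
from the initial blue set B, where the forces u \<rightarrow> w with (u,w) in F are
forbidden.\<close>
inductive_set fclosure :: "'a set \<Rightarrow> ('a \<Rightarrow> 'a \<Rightarrow> bool) \<Rightarrow> ('a \<times> 'a) set \<Rightarrow> 'a set \<Rightarrow> 'a set"
  for V E F B where
  init: "b \<in> B \<Longrightarrow> b \<in> fclosure V E F B"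
| force: "\<lbrakk> u \<in> fclosure V E F B; E u w; (u, w) \<notin> F;
            \<And>x. E u x \<Longrightarrow> x \<noteq> w \<Longrightarrow> x \<in> fclosure V E F B \<rbrakk>
          \<Longrightarrow> w \<in> fclosure V E F B"

datatype 'a leak = VLeak 'a | ELeak 'a 'a | SLeak 'a 'a

definition valid_leak :: "'a set \<Rightarrow> ('a \<Rightarrow> 'a \<Rightarrow> bool) \<Rightarrow> 'a leak \<Rightarrow> bool" where
  "valid_leak V E l = (case l of
      VLeak v \<Rightarrow> v \<in> V
    | ELeak x y \<Rightarrow> E x y
    | SLeak x y \<Rightarrow> E x y)"

fun forbidden :: "'a leak \<Rightarrow> ('a \<times> 'a) set" where
  "forbidden (VLeak v) = {(u, w). u = v}"
| "forbidden (ELeak x y) = {(x, y), (y, x)}"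
| "forbidden (SLeak x y) = {(x, y)}"

definition leaky_forcing_set :: "'a set \<Rightarrow> ('a \<Rightarrow> 'a \<Rightarrow> bool) \<Rightarrow> nat \<Rightarrow> 'a set \<Rightarrow> bool" where
  "leaky_forcing_set V E k B \<longleftrightarrow> B \<subseteq> V \<and>
     (\<forall>L. L \<subseteq> V \<and> card L \<le> k \<longrightarrow> fclosure V E {(u, w). u \<in> L} B = V)"

definition mixed_leaky_forcing_set :: "'a set \<Rightarrow> ('a \<Rightarrow> 'a \<Rightarrow> bool) \<Rightarrow> nat \<Rightarrow> 'a set \<Rightarrow> bool" where
  "mixed_leaky_forcing_set V E k B \<longleftrightarrow> B \<subseteq> V \<and>
     (\<forall>L. finite L \<and> card L \<le> k \<and> (\<forall>l\<in>L. valid_leak V E l)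
        \<longrightarrow> fclosure V E (\<Union>l\<in>L. forbidden l) B = V)"

definition leaky_Z :: "'a set \<Rightarrow> ('a \<Rightarrow> 'a \<Rightarrow> bool) \<Rightarrow> nat \<Rightarrow> nat" where
  "leaky_Z V E k = (LEAST n. \<exists>B. leaky_forcing_set V E k B \<and> card B = n)"

definition mixed_leaky_Z :: "'a set \<Rightarrow> ('a \<Rightarrow> 'a \<Rightarrow> bool) \<Rightarrow> nat \<Rightarrow> nat" where
  "mixed_leaky_Z V E k = (LEAST n. \<exists>B. mixed_leaky_forcing_set V E k B \<and> card B = n)"

end

theory Submission
  imports Defs
begin

text \<open>A vertex leak is a special mixed leak, so one direction is immediate. Conversely, run
  the forcing process against a set of mixed leaks until it stops at a final blue set C.
  Every leak that actually blocks a force u \<rightarrow> w out of C (u blue, w white) can only do so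
  with u as the blue endpoint, and for an edge leak at most one endpoint can be blue and the
  other white. Replacing each leak by a vertex leak at that endpoint yields at most as many
  vertex leaks, and C stays closed under the forces they allow; so if the vertex leaks cannot
  stop B from forcing everything, neither could the mixed leaks.\<close>

lemma fclosure_subset:
  assumes "B \<subseteq> V" and "simple_graph V E"
  shows "fclosure V E F B \<subseteq> V"
proof
  fix x assume "x \<in> fclosure V E F B"
  then show "x \<in> V"
    by induction (use assms in \<open>auto simp: simple_graph_def\<close>)
qed

lemma fclosure_least:
  assumes "B \<subseteq> C"
    and closed: "\<And>u w. u \<in> C \<Longrightarrow> E u w \<Longrightarrow> (u, w) \<notin> F
                   \<Longrightarrow> (\<And>x. E u x \<Longrightarrow> x \<noteq> w \<Longrightarrow> x \<in> C) \<Longrightarrow> w \<in> C"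
  shows "fclosure V E F B \<subseteq> C"
proof
  fix x assume "x \<in> fclosure V E F B"
  then show "x \<in> C"
  proof induction
    case (init b)
    then show ?case using assms(1) by blast
  next
    case (force u w)
    show ?case by (rule closed[of u]) (fact force)+
  qed
qed

lemma fclosure_vertex_leaks_subset:
  assumes blocking: "\<And>u w. (u, w) \<in> F \<Longrightarrow> u \<in> fclosure V E F B \<Longrightarrow> w \<notin> fclosure V E F B
                        \<Longrightarrow> u \<in> S"
  shows "fclosure V E {(u, w). u \<in> S} B \<subseteq> fclosure V E F B"
proof (rule fclosure_least)
  show "B \<subseteq> fclosure V E F B" by (auto intro: fclosure.init)
next
  fix u w
  assume u: "u \<in> fclosure V E F B" and "E u w" and "(u, w) \<notin> {(u, w). u \<in> S}"
    and others: "\<And>x. E u x \<Longrightarrow> x \<noteq> w \<Longrightarrow> x \<in> fclosure V E F B"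
  show "w \<in> fclosure V E F B"
  proof (cases "(u, w) \<in> F")
    case True
    with u blocking \<open>(u, w) \<notin> {(u, w). u \<in> S}\<close> show ?thesis by blast
  next
    case False
    from u \<open>E u w\<close> this others show ?thesis by (rule fclosure.force)
  qed
qed

text \<open>The vertex leak replacing a leak, relative to the final blue set C.\<close>

fun leak_vertex :: "'a set \<Rightarrow> 'a leak \<Rightarrow> 'a" where
  "leak_vertex C (VLeak v) = v"
| "leak_vertex C (ELeak x y) = (if x \<in> C then x else y)"
| "leak_vertex C (SLeak x y) = x"

lemma leak_vertex_in_V:
  assumes "valid_leak V E l" and "simple_graph V E"
  shows "leak_vertex C l \<in> V"
  using assms by (cases l) (auto simp: valid_leak_def simple_graph_def)

lemma forbidden_blocking_leak_vertex:
  assumes "(u, w) \<in> forbidden l" and "u \<in> C" and "w \<notin> C"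
  shows "u = leak_vertex C l"
  using assms by (cases l) auto

lemma leaky_forcing_set_imp_mixed:
  assumes graph: "simple_graph V E" and leaky: "leaky_forcing_set V E k B"
  shows "mixed_leaky_forcing_set V E k B"
  unfolding mixed_leaky_forcing_set_def
proof (intro conjI allI impI)
  show "B \<subseteq> V" using leaky by (simp add: leaky_forcing_set_def)
  fix L :: "'a leak set"
  assume "finite L \<and> card L \<le> k \<and> (\<forall>l\<in>L. valid_leak V E l)"
  then have "finite L" "card L \<le> k" "\<forall>l\<in>L. valid_leak V E l" by auto
  define F where "F = (\<Union>l\<in>L. forbidden l)"
  define C where "C = fclosure V E F B"
  define S where "S = leak_vertex C ` L"
  have "S \<subseteq> V"
    unfolding S_def
    using \<open>\<forall>l\<in>L. valid_leak V E l\<close> by (intro image_subsetI leak_vertex_in_V[OF _ graph]) blast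
  moreover have "card S \<le> k"
    unfolding S_def using card_image_le[OF \<open>finite L\<close>] \<open>card L \<le> k\<close> by (rule le_trans)
  ultimately have "fclosure V E {(u, w). u \<in> S} B = V"
    using leaky by (simp add: leaky_forcing_set_def)
  moreover have "fclosure V E {(u, w). u \<in> S} B \<subseteq> C"
    unfolding C_def
  proof (rule fclosure_vertex_leaks_subset)
    fix u w assume "(u, w) \<in> F" and blue: "u \<in> fclosure V E F B" "w \<notin> fclosure V E F B"
    then obtain l where "l \<in> L" "(u, w) \<in> forbidden l" unfolding F_def by blast
    moreover from this(2) blue have "u = leak_vertex C l"
      unfolding C_def by (rule forbidden_blocking_leak_vertex)
    ultimately show "u \<in> S" unfolding S_def by blast
  qed
  moreover have "C \<subseteq> V"
    unfolding C_def using \<open>B \<subseteq> V\<close> graph by (rule fclosure_subset)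
  ultimately have "C = V" by blast
  then show "fclosure V E (\<Union>l\<in>L. forbidden l) B = V"
    unfolding C_def F_def .
qed

lemma mixed_leaky_forcing_set_imp_leaky:
  assumes graph: "simple_graph V E" and mixed: "mixed_leaky_forcing_set V E k B"
  shows "leaky_forcing_set V E k B"
  unfolding leaky_forcing_set_def
proof (intro conjI allI impI)
  show "B \<subseteq> V" using mixed by (simp add: mixed_leaky_forcing_set_def)
  fix L assume L: "L \<subseteq> V \<and> card L \<le> k"
  then have "finite L" using graph finite_subset by (auto simp: simple_graph_def)
  then have "card (VLeak ` L) \<le> k" using card_image_le L by (metis le_trans)
  moreover have "\<forall>l\<in>VLeak ` L. valid_leak V E l" using L by (auto simp: valid_leak_def)
  moreover have "(\<Union>l\<in>VLeak ` L. forbidden l) = {(u, w). u \<in> L}" by auto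
  ultimately show "fclosure V E {(u, w). u \<in> L} B = V"
    using mixed \<open>finite L\<close> unfolding mixed_leaky_forcing_set_def by auto
qed

theorem corollary4p3:
  fixes V :: "'a set" and E :: "'a \<Rightarrow> 'a \<Rightarrow> bool" and k :: nat
  assumes "simple_graph V E"
  shows "(\<forall>B. leaky_forcing_set V E k B \<longleftrightarrow> mixed_leaky_forcing_set V E k B)
         \<and> leaky_Z V E k = mixed_leaky_Z V E k"
proof -
  have "\<forall>B. leaky_forcing_set V E k B \<longleftrightarrow> mixed_leaky_forcing_set V E k B"
    using leaky_forcing_set_imp_mixed mixed_leaky_forcing_set_imp_leaky assms by blast
  then show ?thesis unfolding leaky_Z_def mixed_leaky_Z_def by simp
qed

end
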